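(* For every $n>0$ and every set $U$ with $\mathbb R^n_{\mathrm{rect}}\subseteq U\subseteq\mathbb R^n_{\mathrm{reg}}$, the region structure $\mathfrak R(\mathbb R^n,U)$ is domino ready.
   Context: $\mathbb R^n$ has the Euclidean topology with interior $\mathbb I$; $\mathbb R^n_{\mathrm{reg}}$ is the set of non-empty regular closed subsets ($\mathbb C\mathbb I(s)=s$); $\mathbb R^n_{\mathrm{rect}}$ the set of products $\prod_{i=1}^nC_i$ of non-singleton closed intervals. $\mathfrak R(\mathbb R^n,U)$ has domain $U$ and relations $\mathrm{tpp}(s,t)$ iff $s\subseteq t$, $s\not\subseteq\mathbb I(t)$, $s\ne t$, and $\mathrm{ntpp}(s,t)$ iff $s\subseteq\mathbb I(t)$, $s\ne t$ (plus the other RCC8 relations). Let $\lambda$ be the enumeration of $\mathbb N\times\mathbb N$ along anti-diagonals from floor to wall: $\lambda(k(k+1)/2+m+1)=(k-m,m)$ for $k\ge0$, $0\le m\le k$ (so $\lambda(1)=(0,0)$, $\lambda(2)=(1,0)$, $\lambda(3)=(0,1)$, $\lambda(4)=(2,0)$, ...). A region structure with domain $W$ is domino ready if $W$ contains sequences $x_1,x_2,\dots$ and $y_1,y_2,\dots$ such that for all $i,j\ge1$: (1) $x_i\,\mathrm{tpp}\,x_{i+1}$; (2) $x_i\,\mathrm{ntpp}\,x_j$ if $j>i+1$; (3) $x_{2i-1}\,\mathrm{tpp}\,y_i$; (4) $y_i\,\mathrm{tpp}\,x_{2j-1}$ iff $\lambda(j)$ is reached from $\lambda(i)$ by one step to the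 right (first coordinate $+1$); (5) $y_i\,\mathrm{ntpp}\,y_j$ if $j>i$. *)

theory Defs
  imports "HOL-Analysis.Analysis"
begin

definition reg_sets :: "(real^'n) set set" where
  "reg_sets = {s. s \<noteq> {} \<and> closure (interior s) = s}"

definition closed_interval_ns :: "real set \<Rightarrow> bool" where
  "closed_interval_ns C \<longleftrightarrow> closed C \<and> is_interval C \<and> (\<exists>a\<in>C. \<exists>b\<in>C. a \<noteq> b)"

definition rect_sets :: "(real^'n) set set" where
  "rect_sets = {{x. \<forall>i. x $ i \<in> C i} | C. \<forall>i. closed_interval_ns (C i)}"

definition tpp :: "(real^'n) set \<Rightarrow> (real^'n) set \<Rightarrow> bool" where
  "tpp s t \<longleftrightarrow> s \<subseteq> t \<and> \<not> s \<subseteq> interior t \<and> s \<noteq> t"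

definition ntpp :: "(real^'n) set \<Rightarrow> (real^'n) set \<Rightarrow> bool" where
  "ntpp s t \<longleftrightarrow> s \<subseteq> interior t \<and> s \<noteq> t"

text \<open>The enumeration lambda of N x N along anti-diagonals (indices from 1).\<close>
definition lam :: "nat \<Rightarrow> nat \<times> nat" where
  "lam j = (THE p. \<exists>k m. m \<le> k \<and> j = k * (k + 1) div 2 + m + 1 \<and> p = (k - m, m))"

definition domino_ready :: "'a set \<Rightarrow> ('a \<Rightarrow> 'a \<Rightarrow> bool) \<Rightarrow> ('a \<Rightarrow> 'a \<Rightarrow> bool) \<Rightarrow> bool" where
  "domino_ready W tp ntp \<longleftrightarrow>
    (\<exists>x y :: nat \<Rightarrow> 'a.
       (\<forall>i\<ge>1. x i \<in> W \<and> y i \<in> W) \<and>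
       (\<forall>i\<ge>1. tp (x i) (x (i + 1))) \<and>
       (\<forall>i\<ge>1. \<forall>j. j > i + 1 \<longrightarrow> ntp (x i) (x j)) \<and>
       (\<forall>i\<ge>1. tp (x (2 * i - 1)) (y i)) \<and>
       (\<forall>i\<ge>1. \<forall>j\<ge>1. tp (y i) (x (2 * j - 1)) \<longleftrightarrow>
                        lam j = (fst (lam i) + 1, snd (lam i))) \<and>
       (\<forall>i\<ge>1. \<forall>j. j > i \<longrightarrow> ntp (y i) (y j)))"

end

theory Submission
  imports Defs "HOL-Library.Nat_Bijection"
begin

(* All regions used are slabs {x. a <= x$k <= b} in one fixed coordinate k, for which tpp means
   that the intervals [a, b] share exactly one endpoint and ntpp means strict nesting.
   Take x(2i-1) = [-i, i], x(2i) = [-i, i+1] and y(i) = [-i, r(i)], where r(i) = i + a + b + 1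
   is the index with lam (r i) = (a+1, b) when lam i = (a, b).  Then y(i) shares its left
   endpoint only with x(2i-1) and its right endpoint only with x(2r(i)-1), and the y(i) are
   strictly nested because r is strictly increasing: the anti-diagonal a+b is monotone along
   the enumeration, which is the Cantor pairing prod_encode in disguise.  All regions are
   rectangles. *)

lemma lam_Suc_prod_encode: "lam (Suc (prod_encode (m, n))) = (n, m)"
  unfolding lam_def
proof (rule the_equality)
  show "\<exists>k m'. m' \<le> k \<and> Suc (prod_encode (m, n)) = k * (k + 1) div 2 + m' + 1 \<and> (n, m) = (k - m', m')"
    by (intro exI[of _ "m + n"] exI[of _ m]) (simp add: prod_encode_def triangle_def)
next
  fix p
  assume "\<exists>k m'. m' \<le> k \<and> Suc (prod_encode (m, n)) = k * (k + 1) div 2 + m' + 1 \<and> p = (k - m', m')"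
  then obtain k m' where "m' \<le> k" "prod_encode (m, n) = prod_encode (m', k - m')" "p = (k - m', m')"
    by (auto simp: prod_encode_def triangle_def)
  then show "p = (n, m)"
    by simp
qed

lemma Suc_prod_encode_lam: "1 \<le> j \<Longrightarrow> Suc (prod_encode (prod.swap (lam j))) = j"
  using lam_Suc_prod_encode[of "fst (prod_decode (j - 1))" "snd (prod_decode (j - 1))"]
  by simp

lemma inj_on_lam: "inj_on lam {1..}"
  by (rule inj_on_inverseI[of _ "\<lambda>p. Suc (prod_encode (prod.swap p))"]) (simp add: Suc_prod_encode_lam)

definition lam_right :: "nat \<Rightarrow> nat" where
  "lam_right i = i + fst (lam i) + snd (lam i) + 1"

lemma less_lam_right: "i < lam_right i"
  by (simp add: lam_right_def)

lemma lam_lam_right: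
  assumes "1 \<le> i"
  shows "lam (lam_right i) = (fst (lam i) + 1, snd (lam i))"
proof -
  obtain a b where ab: "lam i = (a, b)"
    by fastforce
  have "i = Suc (prod_encode (b, a))"
    using Suc_prod_encode_lam[OF assms] ab by simp
  then have "lam_right i = Suc (prod_encode (b, Suc a))"
    unfolding lam_right_def ab by (simp add: prod_encode_def)
  then show ?thesis
    by (simp add: ab lam_Suc_prod_encode)
qed

lemma lam_eq_right_iff:
  assumes "1 \<le> i" "1 \<le> j"
  shows "lam j = (fst (lam i) + 1, snd (lam i)) \<longleftrightarrow> j = lam_right i"
  using inj_on_lam[THEN inj_onD, of j "lam_right i"] assms less_lam_right[of i]
  by (auto simp: lam_lam_right)

lemma mono_triangle: "mono triangle"
  unfolding mono_iff_le_Suc by simp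

lemma lam_diagonal_mono:
  assumes "1 \<le> i" "i \<le> j"
  shows "fst (lam i) + snd (lam i) \<le> fst (lam j) + snd (lam j)"
proof (rule ccontr)
  define s s' where "s = fst (lam i) + snd (lam i)" and "s' = fst (lam j) + snd (lam j)"
  assume "\<not> s \<le> s'"
  then have "triangle s' + Suc s' \<le> triangle s"
    using mono_triangle[THEN monoD, of "Suc s'" s] by simp
  moreover have "i = Suc (triangle s + snd (lam i))" "j = Suc (triangle s' + snd (lam j))"
    using Suc_prod_encode_lam[of i] Suc_prod_encode_lam[of j] assms
    by (simp_all add: s_def s'_def prod_encode_def case_prod_unfold add.commute)
  ultimately show False
    using assms s'_def by linarith
qed

lemma lam_right_strict_mono: "1 \<le> i \<Longrightarrow> i < j \<Longrightarrow> lam_right i < lam_right j"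
  using lam_diagonal_mono[of i j] by (simp add: lam_right_def)

definition slab :: "'n \<Rightarrow> real set \<Rightarrow> (real^'n) set" where
  "slab k A = {x. x $ k \<in> A}"

lemma slab_subset_iff:
  fixes k :: "'n::finite"
  shows "slab k A \<subseteq> slab k B \<longleftrightarrow> A \<subseteq> B"
proof -
  have "surj (\<lambda>x::real^'n. x $ k)"
    by (rule surjI[of _ "\<lambda>r. \<chi> i. r"]) simp
  then show ?thesis
    using vimage_subsetD[of "\<lambda>x::real^'n. x $ k" A "slab k B"]
    by (auto simp: slab_def surj_image_vimage_eq vimage_def)
qed

lemma slab_eq_iff: "slab k A = slab k B \<longleftrightarrow> A = B"
  by (simp add: set_eq_subset slab_subset_iff)

lemma interior_slab: "interior (slab k {a..b}) = slab k {a<..<b}"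
proof -
  have "slab k {a..b} = {x. a \<le> x $ k} \<inter> {x. x $ k \<le> b}"
    by (auto simp: slab_def)
  then show ?thesis
    by (auto simp: slab_def interior_Int)
qed

lemma Icc_subset_Ioo_iff:
  fixes a b c d :: "'a::linorder"
  assumes "a \<le> b"
  shows "{a..b} \<subseteq> {c<..<d} \<longleftrightarrow> c < a \<and> b < d"
  using assms by (auto simp: subset_eq)

lemma tpp_slab_iff:
  assumes "a < b"
  shows "tpp (slab k {a..b}) (slab k {c..d}) \<longleftrightarrow>
    c \<le> a \<and> b \<le> d \<and> (c = a \<or> b = d) \<and> (c \<noteq> a \<or> b \<noteq> d)"
  using assms
  by (auto simp: tpp_def interior_slab slab_subset_iff slab_eq_iff
      Icc_subset_Ioo_iff)

lemma ntpp_slab_iff: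
  assumes "a < b"
  shows "ntpp (slab k {a..b}) (slab k {c..d}) \<longleftrightarrow> c < a \<and> b < d"
  using assms
  by (auto simp: ntpp_def interior_slab slab_subset_iff slab_eq_iff
      Icc_subset_Ioo_iff)

lemma slab_in_rect_sets:
  assumes "a < b"
  shows "slab k {a..b} \<in> rect_sets"
proof -
  define C where "C i = (if i = k then {a..b} else UNIV)" for i
  have "closed_interval_ns {a..b}"
    using assms unfolding closed_interval_ns_def
    by (metis atLeastAtMost_iff closed_real_atLeastAtMost is_interval_cc less_eq_real_def order.irrefl)
  moreover have "closed_interval_ns (UNIV :: real set)"
    by (auto simp: closed_interval_ns_def intro!: bexI[of _ 0] bexI[of _ 1])
  ultimately have "\<forall>i. closed_interval_ns (C i)"
    by (simp add: C_def)
  moreover have "slab k {a..b} = {x. \<forall>i. x $ i \<in> C i}"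
    by (auto simp: slab_def C_def)
  ultimately show ?thesis
    unfolding rect_sets_def by blast
qed

definition domino_x :: "'n::finite \<Rightarrow> nat \<Rightarrow> (real^'n) set" where
  "domino_x k n = slab k {- real ((n + 1) div 2) .. real (n div 2 + 1)}"

definition domino_y :: "'n::finite \<Rightarrow> nat \<Rightarrow> (real^'n) set" where
  "domino_y k i = slab k {- real i .. real (lam_right i)}"

lemma domino_x_in_rect_sets: "domino_x k n \<in> rect_sets"
  unfolding domino_x_def by (rule slab_in_rect_sets) simp

lemma domino_y_in_rect_sets: "domino_y k i \<in> rect_sets"
  unfolding domino_y_def using less_lam_right[of i] by (intro slab_in_rect_sets) simp

lemma domino_x_odd: "1 \<le> i \<Longrightarrow> domino_x k (2 * i - 1) = slab k {- real i .. real i}"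
  unfolding domino_x_def by (cases i) simp_all

lemma tpp_domino_x_Suc: "tpp (domino_x k n) (domino_x k (n + 1))"
  unfolding domino_x_def by (subst tpp_slab_iff) (auto elim!: evenE oddE)

lemma ntpp_domino_x: "n + 1 < m \<Longrightarrow> ntpp (domino_x k n) (domino_x k m)"
  unfolding domino_x_def by (subst ntpp_slab_iff) (simp_all, presburger)

lemma tpp_domino_x_y: "1 \<le> i \<Longrightarrow> tpp (domino_x k (2 * i - 1)) (domino_y k i)"
  unfolding domino_x_odd domino_y_def using less_lam_right[of i] by (subst tpp_slab_iff) auto

lemma tpp_domino_y_x_iff:
  "1 \<le> i \<Longrightarrow> 1 \<le> j \<Longrightarrow> tpp (domino_y k i) (domino_x k (2 * j - 1)) \<longleftrightarrow> j = lam_right i"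
  unfolding domino_x_odd domino_y_def using less_lam_right[of i] by (subst tpp_slab_iff) auto

lemma ntpp_domino_y: "1 \<le> i \<Longrightarrow> i < j \<Longrightarrow> ntpp (domino_y k i) (domino_y k j)"
  unfolding domino_y_def using less_lam_right[of i] lam_right_strict_mono[of i j]
  by (subst ntpp_slab_iff) auto

theorem lemma5p8:
  fixes U :: "(real^'n) set set"
  assumes "rect_sets \<subseteq> U" and "U \<subseteq> reg_sets"
  shows "domino_ready U tpp ntpp"
proof -
  fix k :: 'n
  have in_U: "domino_x k i \<in> U \<and> domino_y k i \<in> U" for i
    using assms(1) domino_x_in_rect_sets domino_y_in_rect_sets by blast
  have tpp_y_x_iff: "tpp (domino_y k i) (domino_x k (2 * j - 1)) \<longleftrightarrow>
      lam j = (fst (lam i) + 1, snd (lam i))" if "1 \<le> i" "1 \<le> j" for i j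
    using tpp_domino_y_x_iff[OF that] lam_eq_right_iff[OF that] by blast
  show ?thesis
    unfolding domino_ready_def
  proof (rule exI[of _ "domino_x k"], rule exI[of _ "domino_y k"], intro conjI allI impI)
  qed (use in_U tpp_y_x_iff tpp_domino_x_Suc ntpp_domino_x tpp_domino_x_y ntpp_domino_y in blast)+
qed

end
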